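(* Let $G=(V,E)$ be a connected undirected graph with positive edge weights $w$, and run the distributed algorithm described in the context synchronously at every node. Then for every node $v\in V$ and every node $s\in V\setminus\{v\}$, at any time after the first $2\,\mathcal{D}(G)+1$ phases have been completed, the variable $B[v,s]$ at $v$ equals $\mathsf{bc}_v(s)$.
   Context: Graph notions. $G=(V,E)$ is connected, undirected, with weights $w(e)>0$; $N(v)$ is the set of neighbors of $v$ and $N[v]=N(v)\cup\{v\}$. The length of a path is the sum of its edge weights; $\mathrm{dist}(s,t)$ is the length of a shortest $s$–$t$ path. For $s\neq t$, $\mathrm{maxhop}(s,t)$ is the maximum number of edges of a shortest (minimum-length) $s$–$t$ path, $\mathrm{maxhop}(s,s)=0$, and $\mathcal{D}(G)=\max_{s,t\in V}\mathrm{maxhop}(s,t)$. $\sigma_{s,t}$ is the number of shortest $s$–$t$ paths ($\sigma_{s,s}=1$) and $\sigma_{s,t}(v)$ the number of those passing through $v$ ($\sigma_{s,s}(s)=1$). For $s\in V$, $\mathsf{bc}_v(s)=\sum_{t\neq v}\sigma_{s,t}(v)/\sigma_{s,t}$. Algorithm (at each node $v$). Initialization: for all $t\in V$: $D[t]=+\infty$, $\mathrm{NH}[t]=\mathrm{PH}[t]=\emptyset$, and for all $u\in N[v]$: $B[u,t]=0$, $S[u,t]=0$; then $S[v,v]=1$, $D[v]=0$. Execution proceeds in synchronous phases; in each phase every node $v$ sends, for every $t\in V$, the message $(t,D[t],S[v,t],B[v,t])$ to every neighbor, receives all messages sent to it by its neighbors in that phase, and processes each of them (in arbitrary order) as follows.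 On receipt of $(t,d,s,b)$ from $u\in N(v)$: remove $u$ from $\mathrm{NH}[t]$ and from $\mathrm{PH}[t]$; if $d+w(\{u,v\})<D[t]$ set $D[t]\leftarrow d+w(\{u,v\})$; else if $d+w(\{u,v\})=D[t]$ add $u$ to $\mathrm{NH}[t]$; else if $d-w(\{u,v\})=D[t]$ add $u$ to $\mathrm{PH}[t]$. Then set $S[u,t]\leftarrow s$, $B[u,t]\leftarrow b$; if $t\neq v$ set $S[v,t]\leftarrow\sum_{x\in\mathrm{NH}[t]}S[x,t]$; set $B[v,t]\leftarrow S[v,t]\cdot\sum_{x\in\mathrm{PH}[t]}\frac{B[x,t]+1}{S[x,t]}$ (a term with $S[x,t]=0$ is taken as $0$); finally set $C\leftarrow\sum_{x\neq v}B[v,x]$. *)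

theory Defs
  imports Main "HOL-Library.Extended_Real"
begin

definition weighted_graph :: "('v \<Rightarrow> 'v \<Rightarrow> bool) \<Rightarrow> ('v \<Rightarrow> 'v \<Rightarrow> real) \<Rightarrow> bool" where
  "weighted_graph E w \<longleftrightarrow> (\<forall>u v. E u v \<longrightarrow> E v u) \<and> (\<forall>v. \<not> E v v)
     \<and> (\<forall>u v. E u v \<longrightarrow> w u v = w v u \<and> w u v > 0)"

definition connected_graph :: "('v \<Rightarrow> 'v \<Rightarrow> bool) \<Rightarrow> bool" where
  "connected_graph E \<longleftrightarrow> (\<forall>s t. E\<^sup>*\<^sup>* s t)"

definition is_path :: "('v \<Rightarrow> 'v \<Rightarrow> bool) \<Rightarrow> 'v \<Rightarrow> 'v \<Rightarrow> 'v list \<Rightarrow> bool" where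
  "is_path E s t p \<longleftrightarrow> p \<noteq> [] \<and> hd p = s \<and> last p = t \<and> distinct p \<and> successively E p"

definition plen :: "('v \<Rightarrow> 'v \<Rightarrow> real) \<Rightarrow> 'v list \<Rightarrow> real" where
  "plen w p = sum_list (map (\<lambda>(a, b). w a b) (zip p (tl p)))"

definition gdist :: "('v \<Rightarrow> 'v \<Rightarrow> bool) \<Rightarrow> ('v \<Rightarrow> 'v \<Rightarrow> real) \<Rightarrow> 'v \<Rightarrow> 'v \<Rightarrow> real" where
  "gdist E w s t = Min (plen w ` {p. is_path E s t p})"

definition shortest_paths :: "('v \<Rightarrow> 'v \<Rightarrow> bool) \<Rightarrow> ('v \<Rightarrow> 'v \<Rightarrow> real) \<Rightarrow> 'v \<Rightarrow> 'v \<Rightarrow> 'v list set" where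
  "shortest_paths E w s t = {p. is_path E s t p \<and> plen w p = gdist E w s t}"

definition maxhop :: "('v \<Rightarrow> 'v \<Rightarrow> bool) \<Rightarrow> ('v \<Rightarrow> 'v \<Rightarrow> real) \<Rightarrow> 'v \<Rightarrow> 'v \<Rightarrow> nat" where
  "maxhop E w s t = (if s = t then 0 else Max ((\<lambda>p. length p - 1) ` shortest_paths E w s t))"

definition hopdiam :: "('v::finite \<Rightarrow> 'v \<Rightarrow> bool) \<Rightarrow> ('v \<Rightarrow> 'v \<Rightarrow> real) \<Rightarrow> nat" where
  "hopdiam E w = Max {maxhop E w s t | s t. True}"

definition sigma :: "('v \<Rightarrow> 'v \<Rightarrow> bool) \<Rightarrow> ('v \<Rightarrow> 'v \<Rightarrow> real) \<Rightarrow> 'v \<Rightarrow> 'v \<Rightarrow> nat" where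
  "sigma E w s t = card (shortest_paths E w s t)"

definition sigma_via :: "('v \<Rightarrow> 'v \<Rightarrow> bool) \<Rightarrow> ('v \<Rightarrow> 'v \<Rightarrow> real) \<Rightarrow> 'v \<Rightarrow> 'v \<Rightarrow> 'v \<Rightarrow> nat" where
  "sigma_via E w s t v = card {p \<in> shortest_paths E w s t. v \<in> set p}"

definition bc :: "('v::finite \<Rightarrow> 'v \<Rightarrow> bool) \<Rightarrow> ('v \<Rightarrow> 'v \<Rightarrow> real) \<Rightarrow> 'v \<Rightarrow> 'v \<Rightarrow> real" where
  "bc E w v s = (\<Sum>t\<in>UNIV - {v}. real (sigma_via E w s t v) / real (sigma E w s t))"

text \<open>Local state of a node v: D[t], NH[t], PH[t], S[u,t], B[u,t] (stored for all u, only
  u in N[v] is ever used), and C.\<close>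
record 'v nstate =
  Dv :: "'v \<Rightarrow> ereal"
  NH :: "'v \<Rightarrow> 'v set"
  PH :: "'v \<Rightarrow> 'v set"
  Sv :: "'v \<Rightarrow> 'v \<Rightarrow> real"
  Bv :: "'v \<Rightarrow> 'v \<Rightarrow> real"
  Cv :: real

definition init_state :: "'v \<Rightarrow> 'v nstate" where
  "init_state v = \<lparr> Dv = (\<lambda>t. \<infinity>)(v := 0), NH = (\<lambda>t. {}), PH = (\<lambda>t. {}),
      Sv = (\<lambda>u t. 0)(v := (\<lambda>t. 0)(v := 1)), Bv = (\<lambda>u t. 0), Cv = 0 \<rparr>"

definition upd_dist :: "('v \<Rightarrow> 'v \<Rightarrow> real) \<Rightarrow> 'v \<Rightarrow> 'v \<Rightarrow> 'v \<Rightarrow> ereal \<Rightarrow> 'v nstate \<Rightarrow> 'v nstate" where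
  "upd_dist w v u t d st =
    (let st1 = st\<lparr> NH := (NH st)(t := NH st t - {u}), PH := (PH st)(t := PH st t - {u}) \<rparr>;
         x = d + ereal (w u v)
     in if x < Dv st1 t then st1\<lparr> Dv := (Dv st1)(t := x) \<rparr>
        else if x = Dv st1 t then st1\<lparr> NH := (NH st1)(t := insert u (NH st1 t)) \<rparr>
        else if d - ereal (w u v) = Dv st1 t then st1\<lparr> PH := (PH st1)(t := insert u (PH st1 t)) \<rparr>
        else st1)"

text \<open>Step 2: store S[u,t], B[u,t]; recompute S[v,t] (if t ~= v), B[v,t], and C.
  A term with S[x,t] = 0 is taken as 0.\<close>
definition upd_counts :: "'v::finite \<Rightarrow> 'v \<Rightarrow> 'v \<Rightarrow> real \<Rightarrow> real \<Rightarrow> 'v nstate \<Rightarrow> 'v nstate" where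
  "upd_counts v u t s b st =
    (let st1 = st\<lparr> Sv := (Sv st)(u := (Sv st u)(t := s)), Bv := (Bv st)(u := (Bv st u)(t := b)) \<rparr>;
         st2 = (if t \<noteq> v then st1\<lparr> Sv := (Sv st1)(v := (Sv st1 v)(t := (\<Sum>x\<in>NH st1 t. Sv st1 x t))) \<rparr>
                else st1);
         st3 = st2\<lparr> Bv := (Bv st2)(v := (Bv st2 v)(t :=
                  Sv st2 v t * (\<Sum>x\<in>PH st2 t. if Sv st2 x t = 0 then 0
                                               else (Bv st2 x t + 1) / Sv st2 x t))) \<rparr>
     in st3\<lparr> Cv := (\<Sum>x\<in>UNIV - {v}. Bv st3 v x) \<rparr>)"

definition proc_msg :: "('v::finite \<Rightarrow> 'v \<Rightarrow> real) \<Rightarrow> 'v \<Rightarrow> 'v \<Rightarrow> 'v \<Rightarrow> ereal \<Rightarrow> real \<Rightarrow> real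
    \<Rightarrow> 'v nstate \<Rightarrow> 'v nstate" where
  "proc_msg w v u t d s b st = upd_counts v u t s b (upd_dist w v u t d st)"

text \<open>Node v processes, in the order given by the list xs of pairs (u,t), the messages
  (t, D[t], S[u,t], B[u,t]) that each neighbour u sent based on its state in the global
  state g at the start of the phase.\<close>
definition process_list :: "('v::finite \<Rightarrow> 'v \<Rightarrow> real) \<Rightarrow> ('v \<Rightarrow> 'v nstate) \<Rightarrow> 'v
    \<Rightarrow> ('v \<times> 'v) list \<Rightarrow> 'v nstate \<Rightarrow> 'v nstate" where
  "process_list w g v xs st =
     fold (\<lambda>(u, t) st'. proc_msg w v u t (Dv (g u) t) (Sv (g u) u t) (Bv (g u) u t) st') xs st"

text \<open>Global state after k synchronous phases; ord k v is the (arbitrary) order in which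
  node v processes the messages received in phase k+1.\<close>
primrec exec :: "('v::finite \<Rightarrow> 'v \<Rightarrow> real) \<Rightarrow> (nat \<Rightarrow> 'v \<Rightarrow> ('v \<times> 'v) list) \<Rightarrow> nat
    \<Rightarrow> 'v \<Rightarrow> 'v nstate" where
  "exec w ord 0 = init_state"
| "exec w ord (Suc k) = (\<lambda>v. process_list w (exec w ord k) v (ord k v) (exec w ord k v))"

end

theory Submission
  imports Defs
begin

text \<open>
  Fix the source s. The edges u \<rightarrow> v with d(s,u) + w(u,v) = d(s,v) form an acyclic relation
  whose paths starting at s are exactly the shortest paths from s. Hence \<sigma>(s,v) is the sum of
  \<sigma>(s,u) over the DAG predecessors u of v, and, since the shortest s-t paths through v are the
  concatenations of shortest s-v paths with DAG paths from v to t, Brandes' recursion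
  bc_v(s) = \<sigma>(s,v) \<Sum> (bc_x(s) + 1) / \<sigma>(s,x), summed over the DAG successors x of v, holds.

  At every moment the algorithm keeps S[v,t] and B[v,t] equal to the right-hand sides of these
  recursions, evaluated on its current lists NH[t], PH[t] and on the values it has stored for its
  neighbours. D[s] at v is exact after maxhop(s,v) phases, so after maxhop(s,v) + 1 phases NH[s]
  consists of the DAG predecessors of v, and after \<D>(G) + 1 phases PH[s] consists of its DAG
  successors. As maxhop(s,-) increases strictly along DAG edges, induction on the phase gives
  S[v,s] = \<sigma>(s,v) after maxhop(s,v) + 1 phases, and B[v,s] = bc_v(s) as soon as
  k + maxhop(s,v) \<ge> 2 \<D>(G) + 1: the dependencies converge from the far end of the DAG.
\<close>

section \<open>Paths along a relation\<close>

definition rel_paths :: "('a \<Rightarrow> 'a \<Rightarrow> bool) \<Rightarrow> 'a \<Rightarrow> 'a \<Rightarrow> 'a list set" where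
  "rel_paths R a b = {p. p \<noteq> [] \<and> hd p = a \<and> last p = b \<and> successively R p}"

lemma rel_paths_Cons_image:
  assumes "a \<noteq> b"
  shows "rel_paths R a b = (\<lambda>(x, p). a # p) ` (SIGMA x:{x. R a x}. rel_paths R x b)"
proof
  show "rel_paths R a b \<subseteq> (\<lambda>(x, p). a # p) ` (SIGMA x:{x. R a x}. rel_paths R x b)"
  proof
    fix p assume p: "p \<in> rel_paths R a b"
    then obtain q where pq: "p = a # q" by (cases p) (auto simp: rel_paths_def)
    with p assms have "q \<noteq> []" by (auto simp: rel_paths_def)
    with p pq have "R a (hd q)" "q \<in> rel_paths R (hd q) b"
      by (auto simp: rel_paths_def successively_Cons)
    then show "p \<in> (\<lambda>(x, p). a # p) ` (SIGMA x:{x. R a x}. rel_paths R x b)" using pq by force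
  qed
qed (auto simp: rel_paths_def successively_Cons)

lemma rel_paths_snoc_image:
  assumes "a \<noteq> b"
  shows "rel_paths R a b = (\<lambda>(x, p). p @ [b]) ` (SIGMA x:{x. R x b}. rel_paths R a x)"
proof
  show "rel_paths R a b \<subseteq> (\<lambda>(x, p). p @ [b]) ` (SIGMA x:{x. R x b}. rel_paths R a x)"
  proof
    fix p assume p: "p \<in> rel_paths R a b"
    then obtain q where pq: "p = q @ [b]" by (cases p rule: rev_cases) (auto simp: rel_paths_def)
    with p assms have "q \<noteq> []" by (auto simp: rel_paths_def)
    with p pq have "R (last q) b" "q \<in> rel_paths R a (last q)"
      by (auto simp: rel_paths_def successively_append_iff)
    then show "p \<in> (\<lambda>(x, p). p @ [b]) ` (SIGMA x:{x. R x b}. rel_paths R a x)" using pq by force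
  qed
qed (auto simp: rel_paths_def successively_append_iff)

lemma append_tl_in_rel_paths:
  assumes "p \<in> rel_paths R a v" "q \<in> rel_paths R v b"
  shows "p @ tl q \<in> rel_paths R a b"
proof -
  obtain p' q' where "p = p' @ [v]" "q = v # q'"
    using assms by (cases p rule: rev_cases; cases q) (auto simp: rel_paths_def)
  with assms show ?thesis
    by (auto simp: rel_paths_def successively_append_iff successively_Cons hd_append)
qed

lemma rel_paths_through_image:
  "{p \<in> rel_paths R a b. v \<in> set p} = (\<lambda>(p, q). p @ tl q) ` (rel_paths R a v \<times> rel_paths R v b)"
proof
  show "{p \<in> rel_paths R a b. v \<in> set p}
      \<subseteq> (\<lambda>(p, q). p @ tl q) ` (rel_paths R a v \<times> rel_paths R v b)"
  proof clarify
    fix p assume p: "p \<in> rel_paths R a b" "v \<in> set p"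
    then obtain xs ys where split: "p = xs @ v # ys" by (meson split_list)
    with p have "xs @ [v] \<in> rel_paths R a v" "v # ys \<in> rel_paths R v b"
      by (auto simp: rel_paths_def successively_append_iff successively_Cons hd_append)
    then show "p \<in> (\<lambda>(p, q). p @ tl q) ` (rel_paths R a v \<times> rel_paths R v b)"
      using split by (intro rev_image_eqI[of "(xs @ [v], v # ys)"]) auto
  qed
next
  show "(\<lambda>(p, q). p @ tl q) ` (rel_paths R a v \<times> rel_paths R v b)
      \<subseteq> {p \<in> rel_paths R a b. v \<in> set p}"
  proof clarify
    fix p q assume "p \<in> rel_paths R a v" "q \<in> rel_paths R v b"
    moreover from this have "v \<in> set p" unfolding rel_paths_def using last_in_set by blast
    ultimately show "p @ tl q \<in> rel_paths R a b \<and> v \<in> set (p @ tl q)"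
      by (simp add: append_tl_in_rel_paths)
  qed
qed

locale finite_dag =
  fixes R :: "'a::finite \<Rightarrow> 'a \<Rightarrow> bool"
  assumes distinct_if_successively: "successively R p \<Longrightarrow> distinct p"
begin

lemma finite_rel_paths: "finite (rel_paths R a b)"
  by (rule finite_subset[OF _ finite_subset_distinct[OF finite_UNIV]])
    (auto simp: rel_paths_def distinct_if_successively)

lemma rel_paths_refl: "rel_paths R a a = {[a]}"
proof -
  have "p = [a]" if "p \<in> rel_paths R a a" for p
    using that distinct_if_successively[of p]
    by (cases p) (auto simp: rel_paths_def split: if_splits dest: last_in_set)
  then show ?thesis by (auto simp: rel_paths_def)
qed

lemma rel_paths_back_empty: "R a x \<Longrightarrow> rel_paths R x a = {}"
proof -
  assume "R a x"
  have False if "p \<in> rel_paths R x a" for p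
  proof -
    have "successively R (a # p)"
      using that \<open>R a x\<close> by (auto simp: rel_paths_def successively_Cons)
    with distinct_if_successively have "distinct (a # p)" by blast
    with that show False by (auto simp: rel_paths_def)
  qed
  then show ?thesis by blast
qed

lemma card_rel_paths_Cons:
  "card (rel_paths R a b) = (\<Sum>x | R a x. card (rel_paths R x b)) + (if a = b then 1 else 0)"
proof (cases "a = b")
  case True
  then show ?thesis by (simp add: rel_paths_refl rel_paths_back_empty)
next
  case False
  have "inj_on (\<lambda>(x, p). a # p) (SIGMA x:{x. R a x}. rel_paths R x b)"
    by (auto simp: inj_on_def rel_paths_def)
  with False show ?thesis by (simp add: rel_paths_Cons_image card_image finite_rel_paths)
qed

lemma card_rel_paths_snoc:
  assumes "a \<noteq> b"
  shows "card (rel_paths R a b) = (\<Sum>x | R x b. card (rel_paths R a x))"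
proof -
  have "inj_on (\<lambda>(x, p). p @ [b]) (SIGMA x:{x. R x b}. rel_paths R a x)"
    by (auto simp: inj_on_def rel_paths_def)
  then show ?thesis by (simp add: rel_paths_snoc_image[OF assms] card_image finite_rel_paths)
qed

lemma card_rel_paths_through:
  "card {p \<in> rel_paths R a b. v \<in> set p} = card (rel_paths R a v) * card (rel_paths R v b)"
proof -
  have "inj_on (\<lambda>(p, q). p @ tl q) (rel_paths R a v \<times> rel_paths R v b)"
  proof (rule inj_onI, clarify)
    fix p q p' q'
    assume mem: "p \<in> rel_paths R a v" "q \<in> rel_paths R v b"
        "p' \<in> rel_paths R a v" "q' \<in> rel_paths R v b"
      and eq: "p @ tl q = p' @ tl q'"
    obtain ps ps' where ps: "p = ps @ [v]" "p' = ps' @ [v]"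
      using mem(1,3)
      by (cases p rule: rev_cases; cases p' rule: rev_cases) (auto simp: rel_paths_def)
    have q: "q = v # tl q" "q' = v # tl q'"
      using mem(2,4) unfolding rel_paths_def by (cases q; cases q'; simp)+
    have "p @ tl q \<in> rel_paths R a b" "p' @ tl q' \<in> rel_paths R a b"
      using mem by (simp_all add: append_tl_in_rel_paths)
    then have "distinct (p @ tl q)" "distinct (p' @ tl q')"
      by (auto simp only: rel_paths_def mem_Collect_eq intro: distinct_if_successively)
    then have "v \<notin> set ps" "v \<notin> set ps'" using ps by simp_all
    then have "takeWhile (\<lambda>x. x \<noteq> v) (p @ tl q) = ps" "takeWhile (\<lambda>x. x \<noteq> v) (p' @ tl q') = ps'"
      unfolding ps by (simp_all add: takeWhile_tail) blast+
    with eq have "p = p'" using ps by metis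
    with eq q show "p = p' \<and> q = q'" by (metis same_append_eq)
  qed
  then show ?thesis
    by (simp add: rel_paths_through_image card_image card_cartesian_product)
qed

end

section \<open>Shortest paths in a connected weighted graph\<close>

lemma plen_Nil [simp]: "plen w [] = 0"
  and plen_singleton [simp]: "plen w [x] = 0"
  and plen_Cons_Cons [simp]: "plen w (x # y # p) = w x y + plen w (y # p)"
  by (simp_all add: plen_def)

lemma plen_append_Cons: "plen w (xs @ y # zs) = plen w (xs @ [y]) + plen w (y # zs)"
  by (induction xs rule: induct_list012) auto

lemma plen_snoc: "p \<noteq> [] \<Longrightarrow> plen w (p @ [y]) = plen w p + w (last p) y"
  by (induction p rule: induct_list012) auto

lemma maxhop_le_hopdiam: "maxhop E w s t \<le> hopdiam E w"
proof -
  have "{maxhop E w a b | a b. True} = (\<lambda>(a, b). maxhop E w a b) ` UNIV" by auto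
  then show ?thesis unfolding hopdiam_def by (intro Max_ge) auto
qed

locale connected_weighted_graph =
  fixes E :: "'v::finite \<Rightarrow> 'v \<Rightarrow> bool" and w :: "'v \<Rightarrow> 'v \<Rightarrow> real"
  assumes weighted_graph: "weighted_graph E w" and connected_graph: "connected_graph E"
begin

lemma edge_sym: "E u v \<Longrightarrow> E v u"
  and no_loop: "\<not> E v v"
  and weight_sym: "E u v \<Longrightarrow> w u v = w v u"
  and weight_pos: "E u v \<Longrightarrow> 0 < w u v"
  using weighted_graph by (auto simp: weighted_graph_def)

lemma plen_walk_nonneg: "successively E p \<Longrightarrow> 0 \<le> plen w p"
  by (induction p rule: induct_list012) (auto simp: less_imp_le weight_pos)

lemma path_extend:
  assumes p: "is_path E a x p" and "E x y"
  shows "\<exists>q. is_path E a y q \<and> plen w q \<le> plen w p + w x y"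
proof (cases "y \<in> set p")
  case True
  then obtain xs ys where split: "p = xs @ y # ys" by (meson split_list)
  have "successively E (xs @ [y])" "successively E (y # ys)"
    using p unfolding split is_path_def by (simp_all add: successively_append_iff)
  with p split have "is_path E a y (xs @ [y])"
    by (cases xs) (simp_all add: is_path_def)
  moreover have "plen w p = plen w (xs @ [y]) + plen w (y # ys)"
    unfolding split by (rule plen_append_Cons)
  then have "plen w (xs @ [y]) \<le> plen w p"
    using plen_walk_nonneg[OF \<open>successively E (y # ys)\<close>] by simp
  ultimately show ?thesis using weight_pos[OF \<open>E x y\<close>] by (intro exI[of _ "xs @ [y]"]) simp
next
  case False
  with p \<open>E x y\<close> have "is_path E a y (p @ [y])"
    by (auto simp: is_path_def successively_append_iff)
  then show ?thesis using p by (intro exI[of _ "p @ [y]"]) (simp add: plen_snoc is_path_def)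
qed

lemma path_exists: "\<exists>p. is_path E a b p"
proof -
  have "E\<^sup>*\<^sup>* a b" using connected_graph by (simp add: connected_graph_def)
  then show ?thesis
  proof (induction rule: rtranclp_induct)
    case base
    show ?case by (rule exI[of _ "[a]"]) (simp add: is_path_def)
  next
    case (step x y)
    then show ?case using path_extend by blast
  qed
qed

lemma finite_paths: "finite {p. is_path E a b p}"
  by (rule finite_subset[OF _ finite_subset_distinct[OF finite_UNIV]]) (auto simp: is_path_def)

lemma gdist_le: "is_path E a b p \<Longrightarrow> gdist E w a b \<le> plen w p"
  unfolding gdist_def using finite_paths by (intro Min_le) auto

lemma gdist_attained: "\<exists>p. is_path E a b p \<and> plen w p = gdist E w a b"
proof -
  have "gdist E w a b \<in> plen w ` {p. is_path E a b p}"
    unfolding gdist_def using finite_paths path_exists by (intro Min_in) auto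
  then show ?thesis by auto
qed

lemma gdist_nonneg: "0 \<le> gdist E w a b"
proof -
  obtain p where "is_path E a b p" "plen w p = gdist E w a b" using gdist_attained by blast
  then show ?thesis using plen_walk_nonneg[of p] by (simp add: is_path_def)
qed

lemma gdist_refl: "gdist E w a a = 0"
  using gdist_le[of a a "[a]"] gdist_nonneg[of a a] by (simp add: is_path_def)

lemma gdist_triangle:
  assumes "E x y" shows "gdist E w a y \<le> gdist E w a x + w x y"
proof -
  obtain p where p: "is_path E a x p" "plen w p = gdist E w a x" using gdist_attained by blast
  then obtain q where q: "is_path E a y q" "plen w q \<le> plen w p + w x y"
    using path_extend[OF p(1) assms] by blast
  show ?thesis using gdist_le[OF q(1)] q(2) p(2) by linarith
qed

end

section \<open>The shortest-path DAG of a source\<close>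

locale shortest_path_dag = connected_weighted_graph E w
  for E :: "'v::finite \<Rightarrow> 'v \<Rightarrow> bool" and w + fixes s :: 'v
begin

definition sdist :: "'v \<Rightarrow> real" where "sdist x = gdist E w s x"

definition sp_edge :: "'v \<Rightarrow> 'v \<Rightarrow> bool" where
  "sp_edge x y \<longleftrightarrow> E x y \<and> sdist x + w x y = sdist y"

lemma sdist_source [simp]: "sdist s = 0"
  by (simp add: sdist_def gdist_refl)

lemma sdist_nonneg: "0 \<le> sdist x"
  by (simp add: sdist_def gdist_nonneg)

lemma sdist_edge: "E x y \<Longrightarrow> sdist y \<le> sdist x + w x y"
  by (simp add: sdist_def gdist_triangle)

lemma sdist_less_if_sp_edge: "sp_edge x y \<Longrightarrow> sdist x < sdist y"
  by (auto simp: sp_edge_def dest: weight_pos)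

sublocale finite_dag sp_edge
proof
  fix p assume "successively sp_edge p"
  then have "successively (\<lambda>x y. sdist x < sdist y) p"
    by (rule successively_mono) (rule sdist_less_if_sp_edge)
  then have "sorted_wrt (<) (map sdist p)"
    by (simp add: successively_conv_sorted_wrt sorted_wrt_map transp_def)
  then show "distinct p"
    by (simp add: strict_sorted_iff distinct_map)
qed

lemma successively_edge_if_sp_edge: "successively sp_edge p \<Longrightarrow> successively E p"
  by (erule successively_mono) (simp add: sp_edge_def)

lemma sdist_diff_le_plen: "successively E p \<Longrightarrow> p \<noteq> [] \<Longrightarrow> sdist (last p) - sdist (hd p) \<le> plen w p"
proof (induction p rule: induct_list012)
  case (3 x y zs)
  have "sdist (last (y # zs)) - sdist (hd (y # zs)) \<le> plen w (y # zs)"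
    using "3.prems"(1) by (intro "3.IH"(2)) simp_all
  moreover have "sdist y \<le> sdist x + w x y" using "3.prems"(1) by (simp add: sdist_edge)
  ultimately show ?case by simp
qed auto

lemma plen_sp_path: "successively sp_edge p \<Longrightarrow> p \<noteq> [] \<Longrightarrow> plen w p = sdist (last p) - sdist (hd p)"
  by (induction p rule: induct_list012) (auto simp: sp_edge_def)

lemma sp_path_if_tight:
  "successively E p \<Longrightarrow> p \<noteq> [] \<Longrightarrow> plen w p \<le> sdist (last p) - sdist (hd p) \<Longrightarrow> successively sp_edge p"
proof (induction p rule: induct_list012)
  case (3 x y zs)
  have "sdist (last (y # zs)) - sdist (hd (y # zs)) \<le> plen w (y # zs)"
    using "3.prems"(1) by (intro sdist_diff_le_plen) simp_all
  moreover have "sdist y \<le> sdist x + w x y" using "3.prems"(1) by (simp add: sdist_edge)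
  ultimately show ?case using "3.prems" "3.IH"(2) by (auto simp: sp_edge_def)
qed auto

lemma shortest_paths_eq_rel_paths: "shortest_paths E w s t = rel_paths sp_edge s t"
proof
  show "shortest_paths E w s t \<subseteq> rel_paths sp_edge s t"
  proof
    fix p assume "p \<in> shortest_paths E w s t"
    then have p: "is_path E s t p" "plen w p = sdist t"
      by (simp_all add: shortest_paths_def sdist_def)
    then have "successively sp_edge p" using sp_path_if_tight[of p] by (simp add: is_path_def)
    with p(1) show "p \<in> rel_paths sp_edge s t" by (simp add: rel_paths_def is_path_def)
  qed
  show "rel_paths sp_edge s t \<subseteq> shortest_paths E w s t"
  proof
    fix p assume p: "p \<in> rel_paths sp_edge s t"
    then have "successively E p" "distinct p"
      by (simp_all add: rel_paths_def successively_edge_if_sp_edge distinct_if_successively)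
    with p plen_sp_path[of p] show "p \<in> shortest_paths E w s t"
      by (auto simp: shortest_paths_def rel_paths_def is_path_def sdist_def gdist_refl)
  qed
qed

lemma sigma_eq_card_rel_paths: "sigma E w s t = card (rel_paths sp_edge s t)"
  by (simp add: sigma_def shortest_paths_eq_rel_paths)

lemma rel_paths_from_source_nonempty: "rel_paths sp_edge s t \<noteq> {}"
proof -
  obtain p where "is_path E s t p" "plen w p = gdist E w s t" using gdist_attained by blast
  then have "p \<in> shortest_paths E w s t" by (simp add: shortest_paths_def)
  then show ?thesis by (auto simp: shortest_paths_eq_rel_paths)
qed

lemma sigma_pos: "0 < sigma E w s t"
  using rel_paths_from_source_nonempty finite_rel_paths
  by (simp add: sigma_eq_card_rel_paths card_gt_0_iff)

lemma sigma_snoc: "v \<noteq> s \<Longrightarrow> sigma E w s v = (\<Sum>u | sp_edge u v. sigma E w s u)"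
  by (simp add: sigma_eq_card_rel_paths card_rel_paths_snoc)

lemma ex_sp_edge_into: "v \<noteq> s \<Longrightarrow> \<exists>u. sp_edge u v"
  using sigma_snoc[of v] sigma_pos[of v] by (cases "\<exists>u. sp_edge u v") auto

lemma sigma_via_eq_product: "sigma_via E w s t v = sigma E w s v * card (rel_paths sp_edge v t)"
  by (simp add: sigma_via_def shortest_paths_eq_rel_paths card_rel_paths_through
      sigma_eq_card_rel_paths)

lemma bc_eq_sum:
  "bc E w v s = sigma E w s v * (\<Sum>t\<in>-{v}. card (rel_paths sp_edge v t) / sigma E w s t)"
  by (simp add: bc_def sigma_via_eq_product sum_distrib_left Compl_eq_Diff_UNIV)

lemma bc_recursion:
  "bc E w v s = sigma E w s v * (\<Sum>x | sp_edge v x. (bc E w x s + 1) / sigma E w s x)"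
proof -
  let ?N = "\<lambda>x t. real (card (rel_paths sp_edge x t))"
  have bc_plus_one: "(bc E w x s + 1) / sigma E w s x = (\<Sum>t\<in>UNIV. ?N x t / sigma E w s t)" for x
  proof -
    have "(\<Sum>t\<in>UNIV. ?N x t / sigma E w s t) = 1 / sigma E w s x + (\<Sum>t\<in>-{x}. ?N x t / sigma E w s t)"
      by (simp add: sum.remove[of UNIV x] rel_paths_refl Compl_eq_Diff_UNIV)
    then show ?thesis using sigma_pos[of x] by (simp add: bc_eq_sum field_simps)
  qed
  have succ_sum: "(\<Sum>x | sp_edge v x. ?N x t) = (if t = v then 0 else ?N v t)" for t
    using card_rel_paths_Cons[of v t] by (simp add: rel_paths_back_empty)
  have "(\<Sum>x | sp_edge v x. (bc E w x s + 1) / sigma E w s x)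
      = (\<Sum>x | sp_edge v x. \<Sum>t\<in>UNIV. ?N x t / sigma E w s t)"
    by (simp add: bc_plus_one)
  also have "\<dots> = (\<Sum>t\<in>UNIV. (\<Sum>x | sp_edge v x. ?N x t) / sigma E w s t)"
    by (subst sum.swap) (simp add: sum_divide_distrib)
  also have "\<dots> = (\<Sum>t\<in>UNIV. if t = v then 0 else ?N v t / sigma E w s t)"
    by (intro sum.cong) (simp_all add: succ_sum)
  also have "\<dots> = (\<Sum>t\<in>-{v}. ?N v t / sigma E w s t)"
    by (simp add: sum.If_cases)
  finally show ?thesis using sigma_pos[of v] by (simp add: bc_eq_sum)
qed

lemma maxhop_eq_Max: "maxhop E w s x = Max ((\<lambda>p. length p - 1) ` rel_paths sp_edge s x)"
proof (cases "x = s")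
  case True
  have "maxhop E w s s = Max ((\<lambda>p. length p - 1) ` rel_paths sp_edge s s)"
    by (simp add: maxhop_def rel_paths_refl)
  with True show ?thesis by simp
qed (simp add: maxhop_def shortest_paths_eq_rel_paths)

lemma maxhop_less_if_sp_edge:
  assumes "sp_edge x y" shows "maxhop E w s x < maxhop E w s y"
proof -
  have "maxhop E w s x \<in> (\<lambda>p. length p - 1) ` rel_paths sp_edge s x"
    unfolding maxhop_eq_Max using finite_rel_paths rel_paths_from_source_nonempty
    by (intro Max_in) auto
  then obtain p where p: "p \<in> rel_paths sp_edge s x" "maxhop E w s x = length p - 1" by auto
  then have "p @ [y] \<in> rel_paths sp_edge s y" "p \<noteq> []"
    using assms by (auto simp: rel_paths_def successively_append_iff)
  then have "length (p @ [y]) - 1 \<le> maxhop E w s y"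
    unfolding maxhop_eq_Max by (intro Max_ge finite_imageI finite_rel_paths imageI)
  with p(2) \<open>p \<noteq> []\<close> show ?thesis by (cases p) auto
qed

end

section \<open>Processing a message\<close>

lemma upd_dist_simps:
  "Dv (upd_dist w v u t d st) t' =
    (if t' = t \<and> d + ereal (w u v) < Dv st t then d + ereal (w u v) else Dv st t')"
  "NH (upd_dist w v u t d st) t' =
    (if t' \<noteq> t then NH st t'
     else if d + ereal (w u v) = Dv st t then insert u (NH st t) else NH st t - {u})"
  "PH (upd_dist w v u t d st) t' =
    (if t' \<noteq> t then PH st t'
     else if Dv st t < d + ereal (w u v) \<and> d - ereal (w u v) = Dv st t then insert u (PH st t)
     else PH st t - {u})"
  "Sv (upd_dist w v u t d st) = Sv st"
  "Bv (upd_dist w v u t d st) = Bv st"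
  by (cases "d + ereal (w u v) < Dv st t"; cases "d + ereal (w u v) = Dv st t";
      cases "d - ereal (w u v) = Dv st t"; auto simp: upd_dist_def Let_def)+

lemma upd_counts_simps:
  "Dv (upd_counts v u t sb bb st) = Dv st"
  "NH (upd_counts v u t sb bb st) = NH st"
  "PH (upd_counts v u t sb bb st) = PH st"
  "x \<noteq> v \<Longrightarrow> Sv (upd_counts v u t sb bb st) x t' = (if x = u \<and> t' = t then sb else Sv st x t')"
  "x \<noteq> v \<Longrightarrow> Bv (upd_counts v u t sb bb st) x t' = (if x = u \<and> t' = t then bb else Bv st x t')"
  "t' \<noteq> t \<Longrightarrow> Sv (upd_counts v u t sb bb st) x t' = Sv st x t'"
  "t' \<noteq> t \<Longrightarrow> Bv (upd_counts v u t sb bb st) x t' = Bv st x t'"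
  by (auto simp: upd_counts_def Let_def)

lemma upd_counts_recomputes:
  fixes v u t :: "'v::finite" and sb bb :: real and st :: "'v nstate"
  defines "st' \<equiv> upd_counts v u t sb bb st"
  assumes "u \<noteq> v" "v \<notin> NH st t" "v \<notin> PH st t"
  shows "Sv st' v t = (if t = v then Sv st v t else \<Sum>x\<in>NH st' t. Sv st' x t)"
    and "Bv st' v t = Sv st' v t *
      (\<Sum>x\<in>PH st' t. if Sv st' x t = 0 then 0 else (Bv st' x t + 1) / Sv st' x t)"
proof -
  have other: "Sv st' x t = (if x = u then sb else Sv st x t)"
    "Bv st' x t = (if x = u then bb else Bv st x t)"
    if "x \<noteq> v" for x
    using that by (simp_all add: st'_def upd_counts_simps)
  show "Sv st' v t = (if t = v then Sv st v t else \<Sum>x\<in>NH st' t. Sv st' x t)"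
    using assms other by (auto simp: st'_def upd_counts_def Let_def intro!: sum.cong)
  show "Bv st' v t = Sv st' v t *
      (\<Sum>x\<in>PH st' t. if Sv st' x t = 0 then 0 else (Bv st' x t + 1) / Sv st' x t)"
    using assms other by (auto simp: st'_def upd_counts_def Let_def intro!: sum.cong)
qed

lemma proc_msg_simps:
  "Dv (proc_msg w v u t d sb bb st) t' =
    (if t' = t \<and> d + ereal (w u v) < Dv st t then d + ereal (w u v) else Dv st t')"
  "NH (proc_msg w v u t d sb bb st) t' =
    (if t' \<noteq> t then NH st t'
     else if d + ereal (w u v) = Dv st t then insert u (NH st t) else NH st t - {u})"
  "PH (proc_msg w v u t d sb bb st) t' =
    (if t' \<noteq> t then PH st t'
     else if Dv st t < d + ereal (w u v) \<and> d - ereal (w u v) = Dv st t then insert u (PH st t)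
     else PH st t - {u})"
  "x \<noteq> v \<Longrightarrow> Sv (proc_msg w v u t d sb bb st) x t' = (if x = u \<and> t' = t then sb else Sv st x t')"
  "x \<noteq> v \<Longrightarrow> Bv (proc_msg w v u t d sb bb st) x t' = (if x = u \<and> t' = t then bb else Bv st x t')"
  by (simp_all add: proc_msg_def upd_counts_simps upd_dist_simps)

definition consistent_at :: "('v \<Rightarrow> 'v \<Rightarrow> bool) \<Rightarrow> 'v \<Rightarrow> 'v nstate \<Rightarrow> 'v \<Rightarrow> bool" where
  "consistent_at E v st t \<longleftrightarrow> NH st t \<subseteq> {u. E v u} \<and> PH st t \<subseteq> {u. E v u}
     \<and> Sv st v t = (if t = v then 1 else \<Sum>x\<in>NH st t. Sv st x t)
     \<and> Bv st v t =
       Sv st v t * (\<Sum>x\<in>PH st t. if Sv st x t = 0 then 0 else (Bv st x t + 1) / Sv st x t)"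

lemma consistent_at_init_state: "consistent_at E v (init_state v) t"
  by (simp add: consistent_at_def init_state_def)

lemma consistent_at_proc_msg:
  assumes "\<And>t. consistent_at E v st t" "E v u" "\<not> E v v"
  shows "consistent_at E v (proc_msg w v u t d sb bb st) t'"
proof (cases "t' = t")
  case True
  let ?st = "upd_dist w v u t d st"
  have uv: "u \<noteq> v" using assms(2,3) by auto
  have nbrs: "NH ?st t \<subseteq> {u. E v u}" "PH ?st t \<subseteq> {u. E v u}"
    using assms(1,2) by (auto simp: consistent_at_def upd_dist_simps)
  then have "v \<notin> NH ?st t" "v \<notin> PH ?st t" using assms(3) by auto
  note recomputed = upd_counts_recomputes[OF uv this, of sb bb]
  have "Sv ?st v v = 1" using assms(1)[of v] by (simp add: consistent_at_def upd_dist_simps)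
  then show ?thesis using nbrs recomputed True
    unfolding consistent_at_def proc_msg_def upd_counts_simps by presburger
next
  case False
  then have unchanged:
    "NH (proc_msg w v u t d sb bb st) t' = NH st t'"
    "PH (proc_msg w v u t d sb bb st) t' = PH st t'"
    "\<And>x. Sv (proc_msg w v u t d sb bb st) x t' = Sv st x t'"
    "\<And>x. Bv (proc_msg w v u t d sb bb st) x t' = Bv st x t'"
    by (simp_all add: proc_msg_def upd_counts_simps upd_dist_simps)
  show ?thesis using assms(1)[of t'] unfolding consistent_at_def unchanged .
qed

lemma process_list_Nil [simp]: "process_list w g v [] st = st"
  by (simp add: process_list_def)

lemma process_list_Cons [simp]:
  "process_list w g v ((u, t) # xs) st =
     process_list w g v xs (proc_msg w v u t (Dv (g u) t) (Sv (g u) u t) (Bv (g u) u t) st)"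
  by (simp add: process_list_def)

lemma process_list_invariant:
  assumes "P st"
    and "\<And>u t st. (u, t) \<in> set xs \<Longrightarrow> P st \<Longrightarrow>
      P (proc_msg w v u t (Dv (g u) t) (Sv (g u) u t) (Bv (g u) u t) st)"
  shows "P (process_list w g v xs st)"
  using assms by (induction xs arbitrary: st) auto

lemma Dv_process_list_le: "Dv (process_list w g v xs st) t \<le> Dv st t"
proof -
  have "Dv (proc_msg w v u t' d sb bb st') t \<le> Dv st' t" for u t' d sb bb st'
    by (auto simp: proc_msg_simps intro: less_imp_le)
  then show ?thesis
    by (intro process_list_invariant[where P = "\<lambda>st'. Dv st' t \<le> Dv st t"])
      (blast intro: order_trans)+
qed

lemma Dv_process_list_le_msg:
  "(u, t) \<in> set xs \<Longrightarrow> Dv (process_list w g v xs st) t \<le> Dv (g u) t + ereal (w u v)"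
proof (induction xs arbitrary: st)
  case (Cons m xs)
  obtain u' t' where m: "m = (u', t')" by fastforce
  show ?case
  proof (cases "(u, t) \<in> set xs")
    case False
    then have "m = (u, t)" using Cons.prems by simp
    moreover have "Dv (proc_msg w v u t (Dv (g u) t) sb bb st) t \<le> Dv (g u) t + ereal (w u v)"
      for sb bb
      by (simp add: proc_msg_simps not_less)
    ultimately show ?thesis using Dv_process_list_le[of w g v xs _ t] by (auto intro: order_trans)
  qed (use Cons.IH m in simp)
qed simp

lemma stored_process_list:
  assumes "x \<noteq> v"
  shows "Sv (process_list w g v xs st) x t = (if (x, t) \<in> set xs then Sv (g x) x t else Sv st x t)
    \<and> Bv (process_list w g v xs st) x t = (if (x, t) \<in> set xs then Bv (g x) x t else Bv st x t)"
proof (induction xs arbitrary: st)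
  case (Cons m xs)
  obtain u t' where "m = (u, t')" by fastforce
  with Cons assms show ?case by (auto simp: proc_msg_simps)
qed simp

lemma consistent_at_process_list:
  assumes "\<And>t. consistent_at E v st t" "\<And>u t. (u, t) \<in> set xs \<Longrightarrow> E v u" "\<not> E v v"
  shows "consistent_at E v (process_list w g v xs st) t"
proof -
  have "\<forall>t. consistent_at E v (process_list w g v xs st) t"
  proof (rule process_list_invariant)
    fix u t' st'
    assume "(u, t') \<in> set xs" "\<forall>t. consistent_at E v st' t"
    then show "\<forall>t. consistent_at E v
        (proc_msg w v u t' (Dv (g u) t') (Sv (g u) u t') (Bv (g u) u t') st') t"
      using assms(2,3) by (blast intro: consistent_at_proc_msg)
  qed (use assms(1) in blast)
  then show ?thesis by blast
qed

section \<open>Convergence of the algorithm\<close>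

locale bc_run = connected_weighted_graph E w for E :: "'v::finite \<Rightarrow> 'v \<Rightarrow> bool" and w +
  fixes ord :: "nat \<Rightarrow> 'v \<Rightarrow> ('v \<times> 'v) list"
  assumes set_ord: "set (ord k v) = {(u, t). E v u}"
begin

abbreviation cfg :: "nat \<Rightarrow> 'v \<Rightarrow> 'v nstate" where
  "cfg k \<equiv> exec w ord k"

text \<open>cfg k is the global state after k phases, and exec_prefix k v j the state of v during
  phase k + 1 after processing its first j messages.\<close>

definition exec_prefix :: "nat \<Rightarrow> 'v \<Rightarrow> nat \<Rightarrow> 'v nstate" where
  "exec_prefix k v j = process_list w (cfg k) v (take j (ord k v)) (cfg k v)"

lemma exec_prefix_0: "exec_prefix k v 0 = cfg k v"
  by (simp add: exec_prefix_def)

lemma exec_prefix_length: "exec_prefix k v (length (ord k v)) = cfg (Suc k) v"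
  by (simp add: exec_prefix_def)

lemma edge_if_in_ord: "(u, t) \<in> set (ord k v) \<Longrightarrow> E v u"
  using set_ord by auto

lemma edge_if_in_ord_prefix: "(u, t) \<in> set (take j (ord k v)) \<Longrightarrow> E v u"
  using edge_if_in_ord in_set_takeD by fast

lemma consistent_cfg: "consistent_at E v (cfg k v) t"
proof (induction k arbitrary: v t)
  case 0
  show ?case by (simp add: consistent_at_init_state)
next
  case (Suc k)
  show ?case
    unfolding exec.simps using Suc.IH edge_if_in_ord no_loop by (rule consistent_at_process_list)
qed

lemma consistent_exec_prefix: "consistent_at E v (exec_prefix k v j) t"
  unfolding exec_prefix_def using consistent_cfg edge_if_in_ord_prefix no_loop
  by (rule consistent_at_process_list)

end

locale bc_source = bc_run E w ord + shortest_path_dag E w s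
  for E :: "'v::finite \<Rightarrow> 'v \<Rightarrow> bool" and w ord s
begin

lemma sdist_le_via_edge:
  assumes "E v u" "ereal (sdist u) \<le> d"
  shows "ereal (sdist v) \<le> d + ereal (w u v)"
proof -
  have "sdist v \<le> sdist u + w u v" using sdist_edge edge_sym[OF assms(1)] by blast
  then have "ereal (sdist v) \<le> ereal (sdist u) + ereal (w u v)" by simp
  also have "\<dots> \<le> d + ereal (w u v)" using assms(2) by (rule add_right_mono)
  finally show ?thesis .
qed

lemma sdist_le_Dv: "ereal (sdist v) \<le> Dv (cfg k v) s"
proof (induction k arbitrary: v)
  case 0
  show ?case by (cases "v = s") (simp_all add: init_state_def)
next
  case (Suc k)
  show ?case
    unfolding exec.simps
  proof (rule process_list_invariant[where P = "\<lambda>st. ereal (sdist v) \<le> Dv st s"])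
    fix u t and st :: "'v nstate"
    assume "(u, t) \<in> set (ord k v)" "ereal (sdist v) \<le> Dv st s"
    then show "ereal (sdist v) \<le>
        Dv (proc_msg w v u t (Dv (cfg k u) t) (Sv (cfg k u) u t) (Bv (cfg k u) u t) st) s"
      using sdist_le_via_edge[of v u] Suc.IH[of u] set_ord by (auto simp: proc_msg_simps)
  qed (rule Suc.IH)
qed

lemma Dv_exact: "maxhop E w s v \<le> k \<Longrightarrow> Dv (cfg k v) s = ereal (sdist v)"
proof (induction k arbitrary: v)
  case 0
  have "v = s"
  proof (rule ccontr)
    assume "v \<noteq> s"
    then obtain u where "sp_edge u v" using ex_sp_edge_into by blast
    then show False using maxhop_less_if_sp_edge 0 by fastforce
  qed
  then show ?case by (simp add: init_state_def)
next
  case (Suc k)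
  have "Dv (cfg (Suc k) v) s \<le> ereal (sdist v)"
  proof (cases "v = s")
    case True
    then have "Dv (cfg k v) s = ereal (sdist v)" using Suc.IH by (simp add: maxhop_def)
    then show ?thesis using Dv_process_list_le[of w "cfg k" v "ord k v" "cfg k v" s] by simp
  next
    case False
    then obtain u where u: "sp_edge u v" using ex_sp_edge_into by blast
    then have "Dv (cfg k u) s = ereal (sdist u)"
      using Suc maxhop_less_if_sp_edge[OF u] by simp
    moreover have "(u, s) \<in> set (ord k v)" using u set_ord edge_sym by (simp add: sp_edge_def)
    ultimately show ?thesis
      using Dv_process_list_le_msg[of u s "ord k v" w "cfg k" v "cfg k v"] u
      by (simp add: sp_edge_def)
  qed
  then show ?case using sdist_le_Dv[of v "Suc k"] by simp
qed

lemma proc_msg_at_exact_source: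
  assumes D: "Dv st s = ereal (sdist v)" and "E v u" and d: "ereal (sdist u) \<le> d"
  shows "Dv (proc_msg w v u s d sb bb st) s = ereal (sdist v)"
    and "NH (proc_msg w v u s d sb bb st) s =
      (if d = ereal (sdist u) \<and> sp_edge u v then insert u (NH st s) else NH st s - {u})"
    and "d = ereal (sdist u) \<Longrightarrow> PH (proc_msg w v u s d sb bb st) s =
      (if sp_edge v u then insert u (PH st s) else PH st s - {u})"
proof -
  have "E u v" "0 < w u v" "w v u = w u v" using assms(2) edge_sym weight_pos weight_sym by auto
  have tri: "sdist v \<le> sdist u + w u v" using sdist_edge[OF \<open>E u v\<close>] .
  have not_less: "\<not> d + ereal (w u v) < Dv st s"
    using sdist_le_via_edge[OF assms(2) d] D by simp
  have tight: "d + ereal (w u v) = Dv st s \<longleftrightarrow> d = ereal (sdist u) \<and> sp_edge u v"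
    using d tri D \<open>E u v\<close> by (cases d) (auto simp: sp_edge_def)
  show "Dv (proc_msg w v u s d sb bb st) s = ereal (sdist v)"
    using not_less D by (simp add: proc_msg_simps)
  show "NH (proc_msg w v u s d sb bb st) s =
      (if d = ereal (sdist u) \<and> sp_edge u v then insert u (NH st s) else NH st s - {u})"
    using tight by (simp add: proc_msg_simps)
  assume "d = ereal (sdist u)"
  then have "Dv st s < d + ereal (w u v) \<and> d - ereal (w u v) = Dv st s \<longleftrightarrow> sp_edge v u"
    using D assms(2) \<open>0 < w u v\<close> \<open>w v u = w u v\<close> by (auto simp: sp_edge_def)
  then show "PH (proc_msg w v u s d sb bb st) s =
      (if sp_edge v u then insert u (PH st s) else PH st s - {u})"
    by (simp add: proc_msg_simps)
qed

lemma NH_process_list: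
  assumes "Dv st s = ereal (sdist v)" "\<And>u t. (u, t) \<in> set xs \<Longrightarrow> E v u"
    and "\<And>u. ereal (sdist u) \<le> Dv (g u) s" "\<And>u. sp_edge u v \<Longrightarrow> Dv (g u) s = ereal (sdist u)"
  shows "Dv (process_list w g v xs st) s = ereal (sdist v) \<and>
    NH (process_list w g v xs st) s =
      NH st s - {u. (u, s) \<in> set xs} \<union> {u. (u, s) \<in> set xs \<and> sp_edge u v}"
  using assms(1,2)
proof (induction xs arbitrary: st)
  case (Cons m xs)
  obtain u t where m: "m = (u, t)" by fastforce
  let ?st = "proc_msg w v u t (Dv (g u) t) (Sv (g u) u t) (Bv (g u) u t) st"
  have "E v u" using Cons.prems(2)[of u t] m by simp
  have step: "Dv ?st s = ereal (sdist v) \<and>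
      NH ?st s =
        (if t = s then (if sp_edge u v then insert u (NH st s) else NH st s - {u}) else NH st s)"
  proof (cases "t = s")
    case True
    then show ?thesis
      using proc_msg_at_exact_source(1,2)[OF Cons.prems(1) \<open>E v u\<close> assms(3)] assms(4) by auto
  qed (use Cons.prems(1) in \<open>simp add: proc_msg_simps\<close>)
  then have "Dv (process_list w g v xs ?st) s = ereal (sdist v) \<and>
    NH (process_list w g v xs ?st) s =
      NH ?st s - {u. (u, s) \<in> set xs} \<union> {u. (u, s) \<in> set xs \<and> sp_edge u v}"
    using step by (intro Cons.IH) (auto intro: Cons.prems(2))
  with step m show ?case by auto
qed simp

lemma PH_process_list:
  assumes "Dv st s = ereal (sdist v)" "\<And>u t. (u, t) \<in> set xs \<Longrightarrow> E v u"
    and "\<And>u. Dv (g u) s = ereal (sdist u)"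
  shows "PH (process_list w g v xs st) s =
    PH st s - {u. (u, s) \<in> set xs} \<union> {u. (u, s) \<in> set xs \<and> sp_edge v u}"
  using assms(1,2)
proof (induction xs arbitrary: st)
  case (Cons m xs)
  obtain u t where m: "m = (u, t)" by fastforce
  let ?st = "proc_msg w v u t (Dv (g u) t) (Sv (g u) u t) (Bv (g u) u t) st"
  have "E v u" using Cons.prems(2)[of u t] m by simp
  have step: "Dv ?st s = ereal (sdist v) \<and>
      PH ?st s =
        (if t = s then (if sp_edge v u then insert u (PH st s) else PH st s - {u}) else PH st s)"
  proof (cases "t = s")
    case True
    then show ?thesis
      using proc_msg_at_exact_source(1,3)[OF Cons.prems(1) \<open>E v u\<close>] assms(3) by auto
  qed (use Cons.prems(1) in \<open>simp add: proc_msg_simps\<close>)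
  then have "PH (process_list w g v xs ?st) s =
      PH ?st s - {u. (u, s) \<in> set xs} \<union> {u. (u, s) \<in> set xs \<and> sp_edge v u}"
    using step by (intro Cons.IH) (auto intro: Cons.prems(2))
  with step m show ?case by auto
qed simp

lemma Dv_exact_at_sp_pred:
  assumes "sp_edge u v" "maxhop E w s v \<le> k"
  shows "Dv (cfg k u) s = ereal (sdist u)"
  using maxhop_less_if_sp_edge[OF assms(1)] assms(2) by (intro Dv_exact) simp

lemma NH_cfg:
  assumes "maxhop E w s v \<le> k"
  shows "NH (cfg (Suc k) v) s = {u. sp_edge u v}"
proof -
  have "NH (cfg k v) s \<subseteq> {u. E v u}"
    using consistent_cfg[of v k s] by (simp add: consistent_at_def)
  moreover have "NH (process_list w (cfg k) v (ord k v) (cfg k v)) s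
      = NH (cfg k v) s - {u. E v u} \<union> {u. E v u \<and> sp_edge u v}"
    using NH_process_list[where xs = "ord k v", OF Dv_exact[OF assms] edge_if_in_ord sdist_le_Dv
        Dv_exact_at_sp_pred[OF _ assms]]
    by (simp add: set_ord)
  ultimately show ?thesis using edge_sym by (auto simp: sp_edge_def)
qed

lemma NH_exec_prefix:
  assumes "maxhop E w s v < k"
  shows "NH (exec_prefix k v j) s = {u. sp_edge u v}"
proof -
  obtain k' where k: "k = Suc k'" "maxhop E w s v \<le> k'" using assms by (cases k) auto
  have "NH (exec_prefix k v j) s = NH (cfg k v) s - {u. (u, s) \<in> set (take j (ord k v))}
      \<union> {u. (u, s) \<in> set (take j (ord k v)) \<and> sp_edge u v}"
    unfolding exec_prefix_def using assms edge_if_in_ord_prefix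
    by (intro conjunct2[OF NH_process_list] Dv_exact sdist_le_Dv Dv_exact_at_sp_pred) auto
  with NH_cfg[OF k(2)] k(1) show ?thesis by auto
qed

lemma PH_cfg:
  assumes "hopdiam E w \<le> k"
  shows "PH (cfg (Suc k) v) s = {u. sp_edge v u}"
proof -
  have exact: "Dv (cfg k u) s = ereal (sdist u)" for u
    using maxhop_le_hopdiam[of E w s u] assms by (intro Dv_exact) simp
  have "PH (cfg k v) s \<subseteq> {u. E v u}"
    using consistent_cfg[of v k s] by (simp add: consistent_at_def)
  moreover have "PH (process_list w (cfg k) v (ord k v) (cfg k v)) s
      = PH (cfg k v) s - {u. E v u} \<union> {u. E v u \<and> sp_edge v u}"
    using PH_process_list[where xs = "ord k v", OF exact edge_if_in_ord exact]
    by (simp add: set_ord)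
  ultimately show ?thesis by (auto simp: sp_edge_def)
qed

lemma PH_exec_prefix:
  assumes "hopdiam E w < k"
  shows "PH (exec_prefix k v j) s = {u. sp_edge v u}"
proof -
  obtain k' where k: "k = Suc k'" "hopdiam E w \<le> k'" using assms by (cases k) auto
  have exact: "Dv (cfg k u) s = ereal (sdist u)" for u
    using maxhop_le_hopdiam[of E w s u] assms by (intro Dv_exact) simp
  have "PH (exec_prefix k v j) s = PH (cfg k v) s - {u. (u, s) \<in> set (take j (ord k v))}
      \<union> {u. (u, s) \<in> set (take j (ord k v)) \<and> sp_edge v u}"
    unfolding exec_prefix_def using edge_if_in_ord_prefix by (intro PH_process_list exact) auto
  with PH_cfg[OF k(2)] k(1) show ?thesis by auto
qed

text \<open>The entry of a neighbour x at v was last written either in the current phase, from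
  cfg (Suc k) x, or in the previous one, from cfg k x.\<close>

lemma stored_exec_prefix:
  assumes "E v x"
  obtains j' where "Sv (exec_prefix (Suc k) v j) x t = Sv (exec_prefix k x j') x t"
    and "Bv (exec_prefix (Suc k) v j) x t = Bv (exec_prefix k x j') x t"
proof -
  have "x \<noteq> v" using assms no_loop by blast
  note stored = stored_process_list[OF this]
  show ?thesis
  proof (cases "(x, t) \<in> set (take j (ord (Suc k) v))")
    case True
    then show ?thesis
      using that[of "length (ord k x)"]
        stored[of w "cfg (Suc k)" "take j (ord (Suc k) v)" "cfg (Suc k) v" t]
      unfolding exec_prefix_length exec_prefix_def[of "Suc k"] by simp
  next
    case False
    have "(x, t) \<in> set (ord k v)" using assms set_ord by simp
    with False show ?thesis
      using that[of 0] stored[of w "cfg (Suc k)" "take j (ord (Suc k) v)" "cfg (Suc k) v" t]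
        stored[of w "cfg k" "ord k v" "cfg k v" t]
      unfolding exec_prefix_0 exec_prefix_def[of "Suc k"] by simp
  qed
qed

lemma Sv_exec_prefix: "maxhop E w s v < k \<Longrightarrow> Sv (exec_prefix k v j) v s = sigma E w s v"
proof (induction k arbitrary: v j)
  case (Suc k)
  have consistent: "consistent_at E v (exec_prefix (Suc k) v j) s" by (rule consistent_exec_prefix)
  show ?case
  proof (cases "v = s")
    case True
    then show ?thesis
      using consistent by (simp add: consistent_at_def sigma_eq_card_rel_paths rel_paths_refl)
  next
    case False
    have pred: "Sv (exec_prefix (Suc k) v j) u s = sigma E w s u" if "sp_edge u v" for u
    proof -
      have "E v u" using that edge_sym by (simp add: sp_edge_def)
      then obtain j' where "Sv (exec_prefix (Suc k) v j) u s = Sv (exec_prefix k u j') u s"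
        using stored_exec_prefix by blast
      also have "\<dots> = sigma E w s u"
        using Suc.prems maxhop_less_if_sp_edge[OF that] by (intro Suc.IH) simp
      finally show ?thesis .
    qed
    have "Sv (exec_prefix (Suc k) v j) v s = (\<Sum>u | sp_edge u v. Sv (exec_prefix (Suc k) v j) u s)"
      using consistent NH_exec_prefix[OF Suc.prems] False by (simp add: consistent_at_def)
    also have "\<dots> = (\<Sum>u | sp_edge u v. real (sigma E w s u))"
      using pred by simp
    finally show ?thesis using False by (simp add: sigma_snoc)
  qed
qed simp

lemma Bv_exec_prefix:
  "v \<noteq> s \<Longrightarrow> 2 * hopdiam E w + 1 \<le> k + maxhop E w s v \<Longrightarrow> Bv (exec_prefix k v j) v s = bc E w v s"
proof (induction k arbitrary: v j)
  case 0
  then show ?case using maxhop_le_hopdiam[of E w s v] by simp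
next
  case (Suc k)
  let ?H = "hopdiam E w" and ?st = "exec_prefix (Suc k) v j"
  have "maxhop E w s v \<le> ?H" by (rule maxhop_le_hopdiam)
  have succ: "(if Sv ?st y s = 0 then 0 else (Bv ?st y s + 1) / Sv ?st y s)
      = (bc E w y s + 1) / sigma E w s y"
    if "sp_edge v y" for y
  proof -
    have "maxhop E w s v < maxhop E w s y" "maxhop E w s y \<le> ?H"
      using maxhop_less_if_sp_edge[OF that] maxhop_le_hopdiam by auto
    moreover have "y \<noteq> s" using sdist_less_if_sp_edge[OF that] sdist_nonneg[of v] by auto
    moreover have "E v y" using that by (simp add: sp_edge_def)
    then obtain j' where
        "Sv ?st y s = Sv (exec_prefix k y j') y s" "Bv ?st y s = Bv (exec_prefix k y j') y s"
      using stored_exec_prefix by blast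
    ultimately have "Sv ?st y s = sigma E w s y" "Bv ?st y s = bc E w y s"
      using Suc.prems by (simp_all add: Sv_exec_prefix Suc.IH)
    then show ?thesis using sigma_pos[of y] by simp
  qed
  have "Sv ?st v s = sigma E w s v"
    using Suc.prems \<open>maxhop E w s v \<le> ?H\<close> by (intro Sv_exec_prefix) simp
  moreover have "PH ?st s = {y. sp_edge v y}"
    using Suc.prems \<open>maxhop E w s v \<le> ?H\<close> by (intro PH_exec_prefix) simp
  ultimately have "Bv ?st v s = sigma E w s v *
      (\<Sum>y | sp_edge v y. if Sv ?st y s = 0 then 0 else (Bv ?st y s + 1) / Sv ?st y s)"
    using consistent_exec_prefix[of v "Suc k" j s] by (simp add: consistent_at_def)
  also have "\<dots> = sigma E w s v * (\<Sum>y | sp_edge v y. (bc E w y s + 1) / sigma E w s y)"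
    using succ by (intro arg_cong[where f = "(*) _"] sum.cong) simp_all
  finally show ?case using bc_recursion[of v] by simp
qed

end

theorem lemma4:
  fixes E :: "'v::finite \<Rightarrow> 'v \<Rightarrow> bool" and w :: "'v \<Rightarrow> 'v \<Rightarrow> real"
    and ord :: "nat \<Rightarrow> 'v \<Rightarrow> ('v \<times> 'v) list"
    and v s :: 'v and k j :: nat
  assumes "weighted_graph E w" and "connected_graph E"
    and "\<And>k' v'. distinct (ord k' v') \<and> set (ord k' v') = {(u, t). E v' u}"
    and "s \<noteq> v"
    and "2 * hopdiam E w + 1 \<le> k"
    and "j \<le> length (ord k v)"
  shows "Bv (process_list w (exec w ord k) v (take j (ord k v)) (exec w ord k v)) v s = bc E w v s"
proof -
  interpret bc_source E w ord s
    using assms(1-3) by unfold_locales auto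
  show ?thesis
    using Bv_exec_prefix[of v k j] assms(4,5) by (simp add: exec_prefix_def)
qed

end
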